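(* Let $n\ge 0$ and let $\Psi=(\psi_0,\dots,\psi_n)$ with $\psi_k\in(-\tfrac{\pi}{2},\tfrac{\pi}{2})$ for all $k$. For $x\in[-1,1]$ let $\theta\in[0,\pi]$ satisfy $\cos\theta=x$. (a) Define $\boldsymbol\gamma:\mathbb Z\to\mathbb C$ by $\gamma_k:=\tan\psi_k$ for $k=0,\dots,n$ and $\gamma_k=0$ otherwise. Then for all $\theta\in[0,\pi]$, $$\begin{pmatrix}1&0\\0&i\end{pmatrix} H\, U_n(\Psi,\cos\theta)\, H \begin{pmatrix}1&0\\0&-i\end{pmatrix}=\overbrace{\boldsymbol\gamma}(e^{2i\theta})\begin{pmatrix}e^{in\theta}&0\\0&e^{-in\theta}\end{pmatrix}.$$ (b) Define $\boldsymbol\gamma$ by $\gamma_k:=i\tan\psi_k$ for $k=0,\dots,n$ and $\gamma_k=0$ otherwise. Then for all $\theta\in[0,\pi]$, $$H\, U_n(\Psi,\cos\theta)\, H=\overbrace{\boldsymbol\gamma}(e^{2i\theta})\begin{pmatrix}e^{in\theta}&0\\0&e^{-in\theta}\end{pmatrix}.$$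
   Context: $Z=\begin{pmatrix}1&0\\0&-1\end{pmatrix}$, $H=\frac1{\sqrt2}\begin{pmatrix}1&1\\1&-1\end{pmatrix}$. For $x\in[-1,1]$, $W(x):=\begin{pmatrix}x& i\sqrt{1-x^2}\\ i\sqrt{1-x^2}&x\end{pmatrix}$, and $U_n(\Psi,x):=e^{i\psi_0 Z}\prod_{k=1}^n\big(W(x)e^{i\psi_k Z}\big)$ (ordered product, factors with increasing $k$ from left to right). For a compactly supported $\boldsymbol\gamma:\mathbb Z\to\mathbb C$ supported in $[m,n']$, its nonlinear Fourier transform (NLFT) is the matrix-valued function $\overbrace{\boldsymbol\gamma}(z):=\prod_{k=m}^{n'}\frac{1}{\sqrt{1+|\gamma_k|^2}}\begin{pmatrix}1&\gamma_k z^k\\-\overline{\gamma_k}z^{-k}&1\end{pmatrix}$, $z\in\mathbb C\setminus\{0\}$, with the product ordered by increasing $k$ from left to right. *)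

theory Defs
  imports "HOL-Analysis.Analysis"
begin

text \<open>2x2 complex matrices as complex^2^2; index 1 = first row/column, 2 = second.\<close>

definition mat2 :: "complex \<Rightarrow> complex \<Rightarrow> complex \<Rightarrow> complex \<Rightarrow> complex^2^2" where
  "mat2 a b c d = (\<chi> i j. if i = 1 then (if j = 1 then a else b) else (if j = 1 then c else d))"

definition Zmat :: "complex^2^2" where "Zmat = mat2 1 0 0 (-1)"

definition Hmat :: "complex^2^2" where
  "Hmat = mat2 (1 / sqrt 2) (1 / sqrt 2) (1 / sqrt 2) (- 1 / sqrt 2)"

definition Wmat :: "real \<Rightarrow> complex^2^2" where
  "Wmat x = mat2 x (\<i> * sqrt (1 - x\<^sup>2)) (\<i> * sqrt (1 - x\<^sup>2)) x"

text \<open>e^{i psi Z}; since Z = diag(1,-1) this is diag(e^{i psi}, e^{-i psi}).\<close>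
definition expiZ :: "real \<Rightarrow> complex^2^2" where
  "expiZ \<psi> = mat2 (exp (\<i> * \<psi>)) 0 0 (exp (- \<i> * \<psi>))"

fun Uqsp :: "nat \<Rightarrow> (nat \<Rightarrow> real) \<Rightarrow> real \<Rightarrow> complex^2^2" where
  "Uqsp 0 \<Psi> x = expiZ (\<Psi> 0)"
| "Uqsp (Suc n) \<Psi> x = Uqsp n \<Psi> x ** (Wmat x ** expiZ (\<Psi> (Suc n)))"

definition nlft_factor :: "(int \<Rightarrow> complex) \<Rightarrow> int \<Rightarrow> complex \<Rightarrow> complex^2^2" where
  "nlft_factor \<gamma> k z =
     (let s = complex_of_real (1 / sqrt (1 + (cmod (\<gamma> k))\<^sup>2)) in
      mat2 s (s * \<gamma> k * z powi k) (- s * cnj (\<gamma> k) * z powi (- k)) s)"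

definition nlft :: "(int \<Rightarrow> complex) \<Rightarrow> int \<Rightarrow> int \<Rightarrow> complex \<Rightarrow> complex^2^2" where
  "nlft \<gamma> m n' z = foldl (\<lambda>A k. A ** nlft_factor \<gamma> k z) (mat 1) [m..n']"

end

theory Submission
  imports Defs
begin

text \<open>Conjugation by L = H (part b) or L = diag(1,i) H (part a) diagonalises W(cos \<theta>) to
  diag(e^{i\<theta>}, e^{-i\<theta>}) and turns e^{i\<psi> Z} into a rotation by \<psi>. Pushing all diagonal phases
  of the conjugated product to the right, the k-th rotation is conjugated by diag(e^{ik\<theta>}, e^{-ik\<theta>}),
  which multiplies its off-diagonal entries by z^k and z^{-k} with z = e^{2i\<theta>}; since
  cos \<psi> = (1 + tan^2 \<psi>)^{-1/2} on (-\<pi>/2, \<pi>/2), it is then exactly the k-th NLFT factor.\<close>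

lemma mat2_mult:
  "mat2 a b c d ** mat2 a' b' c' d' = mat2 (a*a' + b*c') (a*b' + b*d') (c*a' + d*c') (c*b' + d*d')"
  by (simp add: vec_eq_iff matrix_matrix_mult_def mat2_def sum_2 forall_2)

lemma mat2_eq_iff: "mat2 a b c d = mat2 a' b' c' d' \<longleftrightarrow> a = a' \<and> b = b' \<and> c = c' \<and> d = d'"
  by (auto simp: vec_eq_iff mat2_def forall_2)

lemma mat_1_eq_mat2: "mat 1 = mat2 1 0 0 1"
  by (simp add: vec_eq_iff mat_def mat2_def forall_2)

definition phase_mat :: "nat \<Rightarrow> real \<Rightarrow> complex^2^2" where
  "phase_mat k t = mat2 (exp (\<i> * of_nat k * of_real t)) 0 0 (exp (- \<i> * of_nat k * of_real t))"

lemma phase_mat_0: "phase_mat 0 t = mat 1"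
  by (simp add: phase_mat_def mat_1_eq_mat2)

lemma phase_mat_Suc: "phase_mat k t ** phase_mat 1 t = phase_mat (Suc k) t"
  by (simp add: phase_mat_def mat2_mult mat2_eq_iff exp_add[symmetric] algebra_simps)

lemma exp_i_real: "exp (\<i> * of_real t) = of_real (cos t) + \<i> * of_real (sin t)"
  by (simp add: cis_conv_exp[symmetric] complex_eq_iff)

lemma exp_minus_i_real: "exp (- (\<i> * of_real t)) = of_real (cos t) - \<i> * of_real (sin t)"
  using exp_i_real[of "-t"] by simp

lemma exp_double_power:
  "exp (2 * \<i> * of_real t) ^ k = exp (\<i> * of_nat k * of_real t) * exp (\<i> * of_nat k * of_real t)"
  by (simp add: exp_of_nat_mult[symmetric] exp_add[symmetric] algebra_simps)

lemma sqrt_one_minus_cos_square: "0 \<le> t \<Longrightarrow> t \<le> pi \<Longrightarrow> sqrt (1 - (cos t)\<^sup>2) = sin t"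
  by (simp add: sin_squared_eq[symmetric] sin_ge_zero)

lemma of_real_sqrt_2_square:
  "complex_of_real (sqrt 2) * complex_of_real (sqrt 2) = 2" "(complex_of_real (sqrt 2))\<^sup>2 = 2"
  by (simp_all flip: of_real_mult of_real_power)

lemma Hmat_square: "Hmat ** Hmat = mat 1"
  by (simp add: Hmat_def mat2_mult mat_1_eq_mat2 mat2_eq_iff power2_eq_square[symmetric]
      power_divide flip: of_real_power)

lemma Hmat_Wmat_Hmat:
  assumes "0 \<le> t" "t \<le> pi"
  shows "Hmat ** Wmat (cos t) ** Hmat = phase_mat 1 t"
  using assms
  by (simp add: Hmat_def Wmat_def phase_mat_def mat2_mult mat2_eq_iff sqrt_one_minus_cos_square
      exp_i_real exp_minus_i_real)
     (simp add: field_simps of_real_sqrt_2_square)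

lemma Hmat_expiZ_Hmat: "Hmat ** expiZ p ** Hmat = mat2 (cos p) (\<i> * sin p) (\<i> * sin p) (cos p)"
  by (simp add: Hmat_def expiZ_def mat2_mult mat2_eq_iff exp_i_real exp_minus_i_real[simplified]
      flip: of_real_minus)
     (simp add: field_simps of_real_sqrt_2_square)

lemma conj_diag_1_i:
  "mat2 1 0 0 \<i> ** mat2 a b c d ** mat2 1 0 0 (- \<i>) = mat2 a (- \<i> * b) (\<i> * c) d"
  by (simp add: mat2_mult mat2_eq_iff mult.commute[of _ \<i>])

lemma nlft_0: "nlft g 0 0 z = nlft_factor g 0 z"
  by (simp add: nlft_def)

lemma nlft_Suc: "nlft g 0 (int (Suc n)) z = nlft g 0 (int n) z ** nlft_factor g (int (Suc n)) z"
proof -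
  have "[0..int (Suc n)] = [0..int n] @ [int (Suc n)]"
    using upto_rec2[of 0 "int (Suc n)"] by simp
  thus ?thesis by (simp add: nlft_def)
qed

lemma phase_mat_rotation_eq_nlft_factor:
  assumes p: "- (pi / 2) < p" "p < pi / 2" and c: "cmod c = 1"
    and g: "g (int k) = c * of_real (tan p)"
  shows "phase_mat k t ** mat2 (cos p) (c * sin p) (- cnj c * sin p) (cos p)
         = nlft_factor g (int k) (exp (2 * \<i> * of_real t)) ** phase_mat k t"
proof -
  have cos_pos: "cos p > 0" using p cos_gt_zero_pi by auto
  then have "1 + (tan p)\<^sup>2 = 1 / (cos p)\<^sup>2"
    by (simp add: tan_def field_simps sin_squared_eq)
  then have "1 / sqrt (1 + (cmod (g (int k)))\<^sup>2) = cos p"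
    using cos_pos by (simp add: g norm_mult c real_sqrt_divide)
  then show ?thesis
    using cos_pos
    by (simp add: nlft_factor_def Let_def phase_mat_def mat2_mult mat2_eq_iff g power_int_minus
        exp_double_power tan_def exp_minus)
qed

lemma Uqsp_conj_eq_nlft:
  assumes RL: "R ** L = mat 1"
    and W: "L ** Wmat x ** R = phase_mat 1 t"
    and factor: "\<And>k. k \<le> n \<Longrightarrow>
      phase_mat k t ** (L ** expiZ (\<Psi> k) ** R) = nlft_factor g (int k) (exp (2 * \<i> * of_real t)) ** phase_mat k t"
  shows "L ** Uqsp n \<Psi> x ** R = nlft g 0 (int n) (exp (2 * \<i> * of_real t)) ** phase_mat n t"
  using factor
proof (induction n)
  case 0
  then show ?case by (simp add: nlft_0 phase_mat_0)
next
  case (Suc n)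
  let ?z = "exp (2 * \<i> * of_real t)"
  have "L ** Uqsp (Suc n) \<Psi> x ** R
        = L ** Uqsp n \<Psi> x ** (R ** L) ** Wmat x ** (R ** L) ** expiZ (\<Psi> (Suc n)) ** R"
    by (simp add: RL matrix_mul_assoc del: Uqsp.simps) (simp add: matrix_mul_assoc)
  also have "\<dots> = (L ** Uqsp n \<Psi> x ** R) ** (L ** Wmat x ** R) ** (L ** expiZ (\<Psi> (Suc n)) ** R)"
    by (simp add: matrix_mul_assoc)
  also have "\<dots> = nlft g 0 (int n) ?z ** (phase_mat (Suc n) t ** (L ** expiZ (\<Psi> (Suc n)) ** R))"
    using Suc by (simp only: W matrix_mul_assoc phase_mat_Suc[symmetric] Suc.IH le_SucI)
  also have "\<dots> = nlft g 0 (int (Suc n)) ?z ** phase_mat (Suc n) t"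
    using Suc.prems[of "Suc n"] by (simp only: nlft_Suc matrix_mul_assoc order_refl)
  finally show ?case .
qed

theorem lemma3p1:
  fixes n :: nat and \<Psi> :: "nat \<Rightarrow> real" and \<theta> :: real
  assumes psi: "\<forall>k\<le>n. - (pi / 2) < \<Psi> k \<and> \<Psi> k < pi / 2"
    and th: "0 \<le> \<theta>" "\<theta> \<le> pi"
  shows "(mat2 1 0 0 \<i> ** Hmat ** Uqsp n \<Psi> (cos \<theta>) ** Hmat ** mat2 1 0 0 (- \<i>)
           = nlft (\<lambda>k. if 0 \<le> k \<and> k \<le> int n then complex_of_real (tan (\<Psi> (nat k))) else 0)
                  0 (int n) (exp (2 * \<i> * \<theta>))
             ** mat2 (exp (\<i> * n * \<theta>)) 0 0 (exp (- \<i> * n * \<theta>)))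
       \<and> (Hmat ** Uqsp n \<Psi> (cos \<theta>) ** Hmat
           = nlft (\<lambda>k. if 0 \<le> k \<and> k \<le> int n then \<i> * complex_of_real (tan (\<Psi> (nat k))) else 0)
                  0 (int n) (exp (2 * \<i> * \<theta>))
             ** mat2 (exp (\<i> * n * \<theta>)) 0 0 (exp (- \<i> * n * \<theta>)))"
proof
  let ?z = "exp (2 * \<i> * complex_of_real \<theta>)"
  let ?S = "mat2 1 0 0 \<i>" and ?S' = "mat2 1 0 0 (- \<i>)"
  let ?\<gamma>a = "\<lambda>k. if 0 \<le> k \<and> k \<le> int n then complex_of_real (tan (\<Psi> (nat k))) else 0"
  let ?\<gamma>b = "\<lambda>k. if 0 \<le> k \<and> k \<le> int n then \<i> * complex_of_real (tan (\<Psi> (nat k))) else 0"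
  have S_conj: "(?S ** Hmat) ** M ** (Hmat ** ?S') = ?S ** (Hmat ** M ** Hmat) ** ?S'" for M
    by (simp add: matrix_mul_assoc)
  have "?S' ** ?S = mat 1"
    by (simp add: mat2_mult mat_1_eq_mat2)
  then have "(Hmat ** ?S') ** (?S ** Hmat) = mat 1"
    by (metis Hmat_square matrix_mul_assoc matrix_mul_lid)
  moreover have "(?S ** Hmat) ** Wmat (cos \<theta>) ** (Hmat ** ?S') = phase_mat 1 \<theta>"
    unfolding S_conj Hmat_Wmat_Hmat[OF th] by (simp add: phase_mat_def conj_diag_1_i)
  moreover have "phase_mat k \<theta> ** ((?S ** Hmat) ** expiZ (\<Psi> k) ** (Hmat ** ?S'))
      = nlft_factor ?\<gamma>a (int k) ?z ** phase_mat k \<theta>" if "k \<le> n" for k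
    using phase_mat_rotation_eq_nlft_factor[of "\<Psi> k" 1 ?\<gamma>a k \<theta>] psi that
    by (simp add: S_conj Hmat_expiZ_Hmat conj_diag_1_i)
  ultimately have "(?S ** Hmat) ** Uqsp n \<Psi> (cos \<theta>) ** (Hmat ** ?S') = nlft ?\<gamma>a 0 (int n) ?z ** phase_mat n \<theta>"
    by (rule Uqsp_conj_eq_nlft)
  then show "?S ** Hmat ** Uqsp n \<Psi> (cos \<theta>) ** Hmat ** ?S' = nlft ?\<gamma>a 0 (int n) ?z
      ** mat2 (exp (\<i> * n * \<theta>)) 0 0 (exp (- \<i> * n * \<theta>))"
    by (simp add: matrix_mul_assoc phase_mat_def)
  have "phase_mat k \<theta> ** (Hmat ** expiZ (\<Psi> k) ** Hmat) = nlft_factor ?\<gamma>b (int k) ?z ** phase_mat k \<theta>"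
    if "k \<le> n" for k
    using phase_mat_rotation_eq_nlft_factor[of "\<Psi> k" \<i> ?\<gamma>b k \<theta>] psi that by (simp add: Hmat_expiZ_Hmat)
  with Hmat_square Hmat_Wmat_Hmat[OF th]
  have "Hmat ** Uqsp n \<Psi> (cos \<theta>) ** Hmat = nlft ?\<gamma>b 0 (int n) ?z ** phase_mat n \<theta>"
    by (rule Uqsp_conj_eq_nlft)
  then show "Hmat ** Uqsp n \<Psi> (cos \<theta>) ** Hmat = nlft ?\<gamma>b 0 (int n) ?z
      ** mat2 (exp (\<i> * n * \<theta>)) 0 0 (exp (- \<i> * n * \<theta>))"
    by (simp add: phase_mat_def)
qed

end
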